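(* Let $n \geq 1$ be an integer. Let $\mathcal{G} = (\mathcal{V}, \mathcal{E})$ be a cycle graph with $|\mathcal{V}| = 2n$ nodes, and let $\mathcal{G}' = (\mathcal{V}', \mathcal{E}')$ be a path graph with $|\mathcal{V}'| = 2n+1$ nodes. Let $P_k$ and $P'_k$ denote the $k$-hop random walk matrices of $\mathcal{G}$ and $\mathcal{G}'$ respectively. Then for every pair of nodes $(i,j) \in \mathcal{V} \times \mathcal{V}$ there exists a pair of nodes $(i',j') \in \mathcal{V}' \times \mathcal{V}'$ such that $(P_k)_{ij} = (P'_k)_{i'j'}$ for all integers $k \geq 1$.
   Context: Graphs are finite and undirected. For a graph with adjacency matrix $A$ (with $A_{ij}=1$ if $i,j$ are adjacent and $0$ otherwise) and diagonal degree matrix $D$ (with $D_{ii} = \sum_j A_{ij}$), the $k$-hop random walk matrix is $P_k = (D^{-1}A)^k$; its $(i,j)$ entry is the probability that a simple random walk of length $k$ started at $i$ ends at $j$. A cycle graph is a graph consisting of a single cycle (all nodes distinct except that the walk returns to its start); a path graph is a graph consisting of a single simple path through all its nodes. *)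

theory Defs
  imports Complex_Main
begin

definition adj :: "('a \<Rightarrow> 'a \<Rightarrow> bool) \<Rightarrow> 'a \<Rightarrow> 'a \<Rightarrow> real" where
  "adj E i j = (if E i j then 1 else 0)"

definition degree :: "'a set \<Rightarrow> ('a \<Rightarrow> 'a \<Rightarrow> bool) \<Rightarrow> 'a \<Rightarrow> real" where
  "degree V E i = (\<Sum>j\<in>V. adj E i j)"

definition rw_step :: "'a set \<Rightarrow> ('a \<Rightarrow> 'a \<Rightarrow> bool) \<Rightarrow> 'a \<Rightarrow> 'a \<Rightarrow> real" where
  "rw_step V E i j = inverse (degree V E i) * adj E i j"

fun rw_matrix :: "'a set \<Rightarrow> ('a \<Rightarrow> 'a \<Rightarrow> bool) \<Rightarrow> nat \<Rightarrow> 'a \<Rightarrow> 'a \<Rightarrow> real" where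
  "rw_matrix V E 0 i j = (if i = j then 1 else 0)"
| "rw_matrix V E (Suc k) i j = (\<Sum>l\<in>V. rw_step V E i l * rw_matrix V E k l j)"

definition cycle_graph :: "'a set \<Rightarrow> ('a \<Rightarrow> 'a \<Rightarrow> bool) \<Rightarrow> nat \<Rightarrow> bool" where
  "cycle_graph V E m \<longleftrightarrow> (\<exists>f. bij_betw f {..<m} V \<and>
     (\<forall>x y. E x y \<longleftrightarrow> (\<exists>i<m. \<exists>j<m. x = f i \<and> y = f j \<and>
        (j = (i + 1) mod m \<or> i = (j + 1) mod m))))"

definition path_graph :: "'a set \<Rightarrow> ('a \<Rightarrow> 'a \<Rightarrow> bool) \<Rightarrow> nat \<Rightarrow> bool" where
  "path_graph V E m \<longleftrightarrow> (\<exists>f. bij_betw f {..<m} V \<and>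
     (\<forall>x y. E x y \<longleftrightarrow> (\<exists>i<m. \<exists>j<m. x = f i \<and> y = f j \<and>
        (j = i + 1 \<or> i = j + 1))))"

end

theory Submission
  imports Defs
begin

(* Seen from the target vertex, both walks are the simple random walk on {0..n} reflected at
   both ends.  On the cycle of length 2n the cyclic distance to j moves by +1 or -1 with
   probability 1/2 each, except that it is pushed to 1 from distance 0 and to n - 1 from the
   antipode.  On the path 0, ..., 2n the distance |y - n| to the middle vertex n behaves in
   exactly the same way, the two endpoints playing the role of the antipode.  Hence
   P_k(i, j) = P'_k(n + d, n), where d is the cyclic distance between i and j. *)

lemma degree_eq_card_neighbours:
  assumes "finite V"
  shows "degree V E i = card {l\<in>V. E i l}"
  using assms by (simp add: degree_def adj_def sum.If_cases Int_def)

lemma rw_matrix_Suc_neighbours: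
  assumes "finite V"
  shows "rw_matrix V E (Suc k) i j =
    (\<Sum>l\<in>{l\<in>V. E i l}. rw_matrix V E k l j) / card {l\<in>V. E i l}"
proof -
  have "rw_matrix V E (Suc k) i j = (\<Sum>l\<in>V. if E i l then rw_matrix V E k l j else 0) / degree V E i"
    by (auto simp: rw_step_def adj_def sum_distrib_left divide_inverse_commute intro!: sum.cong)
  also have "\<dots> = (\<Sum>l\<in>{l\<in>V. E i l}. rw_matrix V E k l j) / card {l\<in>V. E i l}"
    using assms by (simp add: sum.inter_filter degree_eq_card_neighbours)
  finally show ?thesis .
qed

lemma rw_matrix_iso:
  assumes f: "bij_betw f A V" and E: "\<And>a b. a \<in> A \<Longrightarrow> b \<in> A \<Longrightarrow> E (f a) (f b) \<longleftrightarrow> R a b"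
    and "a \<in> A" "b \<in> A"
  shows "rw_matrix V E k (f a) (f b) = rw_matrix A R k a b"
  using assms(3,4)
proof (induction k arbitrary: a)
  case 0
  then show ?case using bij_betw_imp_inj_on[OF f] by (simp add: inj_on_eq_iff)
next
  case (Suc k)
  have deg: "degree V E (f a) = degree A R a"
    unfolding degree_def adj_def using Suc.prems E
    by (simp add: sum.reindex_bij_betw[OF f, symmetric])
  show ?case
    unfolding rw_matrix.simps rw_step_def adj_def
    using Suc E by (simp add: sum.reindex_bij_betw[OF f, symmetric] deg cong: sum.cong)
qed

lemma enumerated_graph_adj:
  assumes "inj_on f {..<m}"
    and "\<forall>x y. E x y \<longleftrightarrow> (\<exists>i<m. \<exists>j<m. x = f i \<and> y = f j \<and> R i j)"
    and "a < m" "b < m"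
  shows "E (f a) (f b) \<longleftrightarrow> R a b"
  using assms by (auto simp: inj_on_eq_iff)

definition reflected_up :: "nat \<Rightarrow> nat \<Rightarrow> nat" where
  "reflected_up n d = (if d = n then n - 1 else d + 1)"

definition reflected_down :: "nat \<Rightarrow> nat" where
  "reflected_down d = (if d = 0 then 1 else d - 1)"

fun reflected_walk :: "nat \<Rightarrow> nat \<Rightarrow> nat \<Rightarrow> real" where
  "reflected_walk n 0 d = (if d = 0 then 1 else 0)"
| "reflected_walk n (Suc k) d =
     (reflected_walk n k (reflected_up n d) + reflected_walk n k (reflected_down d)) / 2"

lemma sum_pair_average:
  fixes h :: "'b \<Rightarrow> real"
  assumes "{\<phi> x, \<phi> y} = {u, v}"
  shows "(\<Sum>l\<in>{x, y}. h (\<phi> l)) / card {x, y} = (h u + h v) / 2"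
  using assms by (cases "x = y"; cases "u = v") (auto simp: doubleton_eq_iff)

(* Comparing sets of \<phi>-values suffices: if the two neighbours coincide or share their
   \<phi>-value, the hypothesis forces reflected_up n (\<phi> i) = reflected_down (\<phi> i). *)
lemma rw_matrix_eq_reflected_walk:
  assumes "finite V"
    and target: "\<And>i. i \<in> V \<Longrightarrow> \<phi> i = 0 \<longleftrightarrow> i = j"
    and neighbours: "\<And>i. i \<in> V \<Longrightarrow> \<exists>x y. {l\<in>V. E i l} = {x, y} \<and>
                       {\<phi> x, \<phi> y} = {reflected_up n (\<phi> i), reflected_down (\<phi> i)}"
    and "i \<in> V"
  shows "rw_matrix V E k i j = reflected_walk n k (\<phi> i)"
  using \<open>i \<in> V\<close>
proof (induction k arbitrary: i)
  case 0
  then show ?case using target by simp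
next
  case (Suc k)
  obtain x y where N: "{l\<in>V. E i l} = {x, y}"
    and \<phi>: "{\<phi> x, \<phi> y} = {reflected_up n (\<phi> i), reflected_down (\<phi> i)}"
    using neighbours[OF Suc.prems] by blast
  have "rw_matrix V E (Suc k) i j = (\<Sum>l\<in>{x, y}. reflected_walk n k (\<phi> l)) / card {x, y}"
    using Suc.IH N by (auto simp: rw_matrix_Suc_neighbours[OF \<open>finite V\<close>] simp del: rw_matrix.simps
      intro!: sum.cong)
  also have "\<dots> = reflected_walk n (Suc k) (\<phi> i)"
    using sum_pair_average[of \<phi>, OF \<phi>] by simp
  finally show ?case .
qed

definition cycle_succ :: "nat \<Rightarrow> nat \<Rightarrow> nat" where
  "cycle_succ m a = (if a + 1 = m then 0 else a + 1)"

definition cycle_pred :: "nat \<Rightarrow> nat \<Rightarrow> nat" where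
  "cycle_pred m a = (if a = 0 then m - 1 else a - 1)"

definition cycle_adj :: "nat \<Rightarrow> nat \<Rightarrow> nat \<Rightarrow> bool" where
  "cycle_adj m a b \<longleftrightarrow> b = cycle_succ m a \<or> b = cycle_pred m a"

definition cycle_offset :: "nat \<Rightarrow> nat \<Rightarrow> nat \<Rightarrow> nat" where
  "cycle_offset m a b = (if b \<le> a then a - b else a + m - b)"

definition cycle_dist :: "nat \<Rightarrow> nat \<Rightarrow> nat \<Rightarrow> nat" where
  "cycle_dist m a b = min (cycle_offset m a b) (m - cycle_offset m a b)"

lemma cycle_succ_eq_mod: "a < m \<Longrightarrow> cycle_succ m a = (a + 1) mod m"
  by (cases "a + 1 = m") (simp_all add: cycle_succ_def)

lemma cycle_adj_iff_mod:
  assumes "a < m" "b < m"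
  shows "cycle_adj m a b \<longleftrightarrow> b = (a + 1) mod m \<or> a = (b + 1) mod m"
  using assms by (simp only: cycle_succ_eq_mod[symmetric])
    (auto simp: cycle_adj_def cycle_succ_def cycle_pred_def)

lemma cycle_graph_rw_matrix:
  assumes "cycle_graph V E m"
  obtains f where "bij_betw f {..<m} V"
    and "\<And>k a b. a < m \<Longrightarrow> b < m \<Longrightarrow>
           rw_matrix V E k (f a) (f b) = rw_matrix {..<m} (cycle_adj m) k a b"
proof -
  obtain f where f: "bij_betw f {..<m} V"
    and E: "\<forall>x y. E x y \<longleftrightarrow> (\<exists>i<m. \<exists>j<m. x = f i \<and> y = f j \<and>
              (j = (i + 1) mod m \<or> i = (j + 1) mod m))"
    using assms unfolding cycle_graph_def by blast
  have adj: "E (f a) (f b) \<longleftrightarrow> cycle_adj m a b" if "a \<in> {..<m}" "b \<in> {..<m}" for a b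
    using enumerated_graph_adj[OF bij_betw_imp_inj_on[OF f] E] that by (simp add: cycle_adj_iff_mod)
  show ?thesis
    using rw_matrix_iso[where E=E and R="cycle_adj m", OF f adj] by (intro that[OF f]) simp
qed

lemma cycle_adj_neighbours:
  "a < m \<Longrightarrow> {l\<in>{..<m}. cycle_adj m a l} = {cycle_succ m a, cycle_pred m a}"
  by (auto simp: cycle_adj_def cycle_succ_def cycle_pred_def)

lemma cycle_offset_succ:
  "a < m \<Longrightarrow> b < m \<Longrightarrow> cycle_offset m (cycle_succ m a) b = cycle_succ m (cycle_offset m a b)"
  by (auto simp: cycle_offset_def cycle_succ_def)

lemma cycle_offset_pred:
  "a < m \<Longrightarrow> b < m \<Longrightarrow> cycle_offset m (cycle_pred m a) b = cycle_pred m (cycle_offset m a b)"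
  by (auto simp: cycle_offset_def cycle_pred_def)

lemma cycle_dist_eq_0_iff: "a < m \<Longrightarrow> b < m \<Longrightarrow> cycle_dist m a b = 0 \<longleftrightarrow> a = b"
  by (auto simp: cycle_dist_def cycle_offset_def)

lemma cycle_dist_neighbours:
  assumes "a < 2 * n" "b < 2 * n"
  shows "{cycle_dist (2 * n) (cycle_succ (2 * n) a) b, cycle_dist (2 * n) (cycle_pred (2 * n) a) b}
       = {reflected_up n (cycle_dist (2 * n) a b), reflected_down (cycle_dist (2 * n) a b)}"
proof -
  have "cycle_offset (2 * n) a b < 2 * n"
    using assms by (auto simp: cycle_offset_def)
  then show ?thesis
    unfolding cycle_dist_def cycle_offset_succ[OF assms] cycle_offset_pred[OF assms]
    unfolding cycle_succ_def cycle_pred_def reflected_up_def reflected_down_def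
    by (cases "cycle_offset (2 * n) a b \<le> n") (auto simp: doubleton_eq_iff)
qed

lemma rw_matrix_cycle:
  assumes "a < 2 * n" "b < 2 * n"
  shows "rw_matrix {..<2 * n} (cycle_adj (2 * n)) k a b = reflected_walk n k (cycle_dist (2 * n) a b)"
proof (rule rw_matrix_eq_reflected_walk)
  fix a assume a: "a \<in> {..<2 * n}"
  then show "cycle_dist (2 * n) a b = 0 \<longleftrightarrow> a = b"
    using assms by (simp add: cycle_dist_eq_0_iff)
  show "\<exists>x y. {l\<in>{..<2 * n}. cycle_adj (2 * n) a l} = {x, y} \<and>
      {cycle_dist (2 * n) x b, cycle_dist (2 * n) y b} =
      {reflected_up n (cycle_dist (2 * n) a b), reflected_down (cycle_dist (2 * n) a b)}"
  proof (intro exI conjI)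
    show "{l\<in>{..<2 * n}. cycle_adj (2 * n) a l} = {cycle_succ (2 * n) a, cycle_pred (2 * n) a}"
      by (rule cycle_adj_neighbours) (use a in simp)
  qed (use a assms in \<open>simp add: cycle_dist_neighbours\<close>)
qed (use assms in auto)

definition path_adj :: "nat \<Rightarrow> nat \<Rightarrow> bool" where
  "path_adj a b \<longleftrightarrow> b = a + 1 \<or> a = b + 1"

lemma path_adj_neighbours:
  assumes "y < m" "2 \<le> m"
  shows "{l\<in>{..<m}. path_adj y l} = {if y + 1 = m then y - 1 else y + 1, if y = 0 then 1 else y - 1}"
  using assms by (auto simp: path_adj_def)

lemma path_graph_rw_matrix:
  assumes "path_graph V E m"
  obtains g where "bij_betw g {..<m} V"
    and "\<And>k a b. a < m \<Longrightarrow> b < m \<Longrightarrow>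
           rw_matrix V E k (g a) (g b) = rw_matrix {..<m} path_adj k a b"
proof -
  obtain g where g: "bij_betw g {..<m} V"
    and E: "\<forall>x y. E x y \<longleftrightarrow> (\<exists>i<m. \<exists>j<m. x = g i \<and> y = g j \<and> (j = i + 1 \<or> i = j + 1))"
    using assms unfolding path_graph_def by blast
  have adj: "E (g a) (g b) \<longleftrightarrow> path_adj a b" if "a \<in> {..<m}" "b \<in> {..<m}" for a b
    using enumerated_graph_adj[OF bij_betw_imp_inj_on[OF g] E] that by (simp add: path_adj_def)
  show ?thesis
    using rw_matrix_iso[where E=E and R=path_adj, OF g adj] by (intro that[OF g]) simp
qed

lemma path_dist_neighbours:
  assumes "y \<le> 2 * n" "1 \<le> n"
  shows "{nat \<bar>int (if y + 1 = 2 * n + 1 then y - 1 else y + 1) - int n\<bar>,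
          nat \<bar>int (if y = 0 then 1 else y - 1) - int n\<bar>}
       = {reflected_up n (nat \<bar>int y - int n\<bar>), reflected_down (nat \<bar>int y - int n\<bar>)}"
  using assms unfolding reflected_up_def reflected_down_def
  by (cases "y \<le> n") (auto simp: doubleton_eq_iff)

lemma rw_matrix_path_to_middle:
  assumes "y \<le> 2 * n" "1 \<le> n"
  shows "rw_matrix {..<2 * n + 1} path_adj k y n = reflected_walk n k (nat \<bar>int y - int n\<bar>)"
proof (rule rw_matrix_eq_reflected_walk)
  fix y assume y: "y \<in> {..<2 * n + 1}"
  show "\<exists>u v. {l\<in>{..<2 * n + 1}. path_adj y l} = {u, v} \<and>
      {nat \<bar>int u - int n\<bar>, nat \<bar>int v - int n\<bar>} =
      {reflected_up n (nat \<bar>int y - int n\<bar>), reflected_down (nat \<bar>int y - int n\<bar>)}"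
  proof (intro exI conjI)
    show "{l\<in>{..<2 * n + 1}. path_adj y l} =
        {if y + 1 = 2 * n + 1 then y - 1 else y + 1, if y = 0 then 1 else y - 1}"
      by (rule path_adj_neighbours) (use y assms in auto)
  qed (use y assms path_dist_neighbours in simp)
qed (use assms in auto)

theorem proposition1:
  fixes n :: nat and V :: "'a set" and E :: "'a \<Rightarrow> 'a \<Rightarrow> bool"
    and V' :: "'b set" and E' :: "'b \<Rightarrow> 'b \<Rightarrow> bool"
  assumes "n \<ge> 1"
    and "cycle_graph V E (2 * n)"
    and "path_graph V' E' (2 * n + 1)"
  shows "\<forall>i\<in>V. \<forall>j\<in>V. \<exists>i'\<in>V'. \<exists>j'\<in>V'.
           \<forall>k::nat. k \<ge> 1 \<longrightarrow> rw_matrix V E k i j = rw_matrix V' E' k i' j'"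
proof (intro ballI)
  fix i j assume "i \<in> V" "j \<in> V"
  obtain f where f: "bij_betw f {..<2 * n} V"
    and cycle: "\<And>k a b. a < 2 * n \<Longrightarrow> b < 2 * n \<Longrightarrow>
                  rw_matrix V E k (f a) (f b) = rw_matrix {..<2 * n} (cycle_adj (2 * n)) k a b"
    using cycle_graph_rw_matrix[OF assms(2)] by blast
  obtain g where g: "bij_betw g {..<2 * n + 1} V'"
    and path: "\<And>k a b. a < 2 * n + 1 \<Longrightarrow> b < 2 * n + 1 \<Longrightarrow>
                 rw_matrix V' E' k (g a) (g b) = rw_matrix {..<2 * n + 1} path_adj k a b"
    using path_graph_rw_matrix[OF assms(3)] by blast
  obtain a b where ab: "a < 2 * n" "b < 2 * n" "i = f a" "j = f b"
    using \<open>i \<in> V\<close> \<open>j \<in> V\<close> f unfolding bij_betw_def by blast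
  define d where "d = cycle_dist (2 * n) a b"
  have "d \<le> n"
    by (simp add: d_def cycle_dist_def)
  have "rw_matrix V E k i j = rw_matrix V' E' k (g (n + d)) (g n)" for k
  proof -
    have "rw_matrix V E k i j = reflected_walk n k d"
      using ab by (simp add: cycle rw_matrix_cycle d_def)
    also have "\<dots> = rw_matrix V' E' k (g (n + d)) (g n)"
      using rw_matrix_path_to_middle[of "n + d" n k] \<open>d \<le> n\<close> assms(1) by (simp add: path)
    finally show ?thesis .
  qed
  moreover have "g (n + d) \<in> V'" "g n \<in> V'"
    using g \<open>d \<le> n\<close> by (auto intro: bij_betw_apply)
  ultimately show "\<exists>i'\<in>V'. \<exists>j'\<in>V'. \<forall>k. k \<ge> 1 \<longrightarrow> rw_matrix V E k i j = rw_matrix V' E' k i' j'"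
    by blast
qed

end
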